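(* Let $f:\mathbb{F}_{2^n}\to\mathbb{F}_{2^n}$ be APN. Then: (a) $M_1(f)+M_2(f)\geq 1$. For $n$ even, equality holds if and only if $f$ is almost-3-to-1. For $n$ odd, equality holds if and only if there is a unique element of $\mathrm{Im}(f)$ with exactly two preimages and all remaining elements of $\mathrm{Im}(f)$ have exactly three preimages. (b) $3M_1(f)+4M_2(f)+3M_3(f)\geq 2^n+2$, with equality if and only if $N(f)=3\cdot 2^n-2$ and $M_r(f)=0$ for all $r>4$; in that case $M_1(f)+M_2(f)=2M_4(f)+1$.
   Context: A map $f:\mathbb{F}_{2^n}\to\mathbb{F}_{2^n}$ is APN (almost perfect nonlinear) if for every $a\neq 0$ and every $b$, the equation $f(x+a)+f(x)=b$ has at most 2 solutions (i.e. $f$ is differentially 2-uniform). $M_r(f)$ is the number of $y$ with exactly $r$ preimages under $f$; $N(f)$ is the number of pairs $(x,y)$ with $f(x)=f(y)$. $f$ is almost-3-to-1 if there is a unique element of $\mathrm{Im}(f)$ with exactly one preimage and every other element of $\mathrm{Im}(f)$ has exactly 3 preimages. *)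

theory Defs
  imports Main
begin

text \<open>Finite field F_{2^n}: a type of class finite field with CARD = 2^n.\<close>

definition APN :: "('a::{field,finite} \<Rightarrow> 'a) \<Rightarrow> bool" where
  "APN f \<longleftrightarrow> (\<forall>a b. a \<noteq> 0 \<longrightarrow> card {x. f (x + a) + f x = b} \<le> 2)"

definition M :: "nat \<Rightarrow> ('a::finite \<Rightarrow> 'b) \<Rightarrow> nat" where
  "M r f = card {y. card (f -` {y}) = r}"

definition Ncoll :: "('a::finite \<Rightarrow> 'b) \<Rightarrow> nat" where
  "Ncoll f = card {(x, y). f x = f y}"

definition almost_3_to_1 :: "('a::finite \<Rightarrow> 'b) \<Rightarrow> bool" where
  "almost_3_to_1 f \<longleftrightarrow>
     (\<exists>!y. y \<in> range f \<and> card (f -` {y}) = 1) \<and>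
     (\<forall>z \<in> range f. card (f -` {z}) \<noteq> 1 \<longrightarrow> card (f -` {z}) = 3)"

end

theory Submission
  imports Defs "HOL-Number_Theory.Residues"
begin

(* Write k_y for the size of the fibre of y and q for the size of the field, so that
   the sum of k_y is q, the sum of k_y^2 is N(f), and M_r(f) counts the y with k_y = r.
   In characteristic 2 a collision f x = f y with x \<noteq> y is a solution of
   f (x + a) + f x = 0 with a = x + y \<noteq> 0, so APN gives N(f) \<le> q + 2 (q - 1).
   Summing the pointwise inequalities k^2 + 2[k=1] + 2[k=2] \<ge> 3k (equality iff k \<le> 3)
   and k^2 + 3[k=1] + 4[k=2] + 3[k=3] \<ge> 4k (equality iff k \<le> 4) over all fibres gives
   both inequalities and their equality cases. In the equality case of (a) all fibres
   have size at most 3, so q = M_1 + 2 M_2 + 3 M_3 \<equiv> 1 + M_2 (mod 3), and 2^n mod 3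
   decides which of M_1, M_2 equals 1. *)

lemma sum_card_vimage:
  fixes f :: "'a::finite \<Rightarrow> 'b::finite"
  shows "(\<Sum>y\<in>UNIV. card (f -` {y})) = card (UNIV :: 'a set)"
  by (subst card_UN_disjoint[symmetric]) (auto simp flip: vimage_UN)

lemma Ncoll_eq_sum_card_vimage_sq:
  fixes f :: "'a::finite \<Rightarrow> 'b::finite"
  shows "Ncoll f = (\<Sum>y\<in>UNIV. card (f -` {y}) * card (f -` {y}))"
proof -
  have "Ncoll f = card (\<Union>y. f -` {y} \<times> f -` {y})"
    unfolding Ncoll_def by (rule arg_cong[where f = card]) auto
  also have "\<dots> = (\<Sum>y\<in>UNIV. card (f -` {y} \<times> f -` {y}))"
    by (rule card_UN_disjoint) auto
  finally show ?thesis by (simp add: card_cartesian_product)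
qed

lemma M_eq_0_above_iff:
  fixes f :: "'a::finite \<Rightarrow> 'b::finite"
  shows "(\<forall>r>m. M r f = 0) \<longleftrightarrow> (\<forall>y. card (f -` {y}) \<le> m)"
  by (auto simp: M_def card_eq_0_iff) (metis not_le)+

lemma sum_eq_sum_iff_of_le:
  fixes f g :: "'i \<Rightarrow> 'a::ordered_cancel_comm_monoid_add"
  assumes "finite A" and "\<And>x. x \<in> A \<Longrightarrow> f x \<le> g x"
  shows "sum f A = sum g A \<longleftrightarrow> (\<forall>x\<in>A. f x = g x)"
  using assms sum_mono_inv[of f A g] by (auto intro: sum.cong)

lemma nat_small_or_mul_self_ge_cases:
  fixes k :: nat
  obtains "k = 0" | "k = 1" | "k = 2" | "k = 3" | "k = 4" | "k \<ge> 5" "5 * k \<le> k * k"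
proof (cases "k \<ge> 5")
  case True
  then have "5 * k \<le> k * k" by simp
  with True show thesis by (rule that)
next
  case False
  then have "k = 0 \<or> k = 1 \<or> k = 2 \<or> k = 3 \<or> k = 4" by arith
  with that show thesis by blast
qed

lemma mul_self_bound3_le: "3 * k \<le> k * k + 2 * (of_bool (k = 1) + of_bool (k = 2))"
  for k :: nat by (cases k rule: nat_small_or_mul_self_ge_cases) auto

lemma mul_self_bound3_eq_iff:
  "3 * k = k * k + 2 * (of_bool (k = 1) + of_bool (k = 2)) \<longleftrightarrow> k \<le> 3"
  for k :: nat by (cases k rule: nat_small_or_mul_self_ge_cases) auto

lemma mul_self_bound4_le:
  "4 * k \<le> k * k + 3 * of_bool (k = 1) + 4 * of_bool (k = 2) + 3 * of_bool (k = 3)"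
  for k :: nat by (cases k rule: nat_small_or_mul_self_ge_cases) auto

lemma mul_self_bound4_eq_iff:
  "4 * k = k * k + 3 * of_bool (k = 1) + 4 * of_bool (k = 2) + 3 * of_bool (k = 3) \<longleftrightarrow> k \<le> 4"
  for k :: nat by (cases k rule: nat_small_or_mul_self_ge_cases) auto

lemma mul_self_bound3_eq_if_le_4:
  "k \<le> 4 \<Longrightarrow> k * k + 2 * (of_bool (k = 1) + of_bool (k = 2)) = 3 * k + 4 * of_bool (k = 4)"
  for k :: nat by (cases k rule: nat_small_or_mul_self_ge_cases) auto

lemma eq_sum_of_bool_if_le_3:
  "k \<le> 3 \<Longrightarrow> k = of_bool (k = 1) + 2 * of_bool (k = 2) + 3 * of_bool (k = 3)"
  for k :: nat by (cases k rule: nat_small_or_mul_self_ge_cases) auto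

lemma card_Collect_eq_1_iff: "card {x. P x} = 1 \<longleftrightarrow> (\<exists>!x. P x)"
proof -
  have "(\<exists>x. {y. P y} = {x}) \<longleftrightarrow> (\<exists>!x. P x)" by (auto simp: set_eq_iff)
  then show ?thesis by (simp add: card_1_singleton_iff)
qed

context
  fixes f :: "'a::finite \<Rightarrow> 'b::finite"
begin

lemma sum_mul_self_bound3:
  "(\<Sum>y\<in>UNIV. card (f -` {y}) * card (f -` {y})
     + 2 * (of_bool (card (f -` {y}) = 1) + of_bool (card (f -` {y}) = 2)))
   = Ncoll f + 2 * (M 1 f + M 2 f)"
  by (simp add: sum.distrib sum_distrib_left Ncoll_eq_sum_card_vimage_sq M_def)

lemma sum_mul_self_bound4:
  "(\<Sum>y\<in>UNIV. card (f -` {y}) * card (f -` {y}) + 3 * of_bool (card (f -` {y}) = 1)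
     + 4 * of_bool (card (f -` {y}) = 2) + 3 * of_bool (card (f -` {y}) = 3))
   = Ncoll f + (3 * M 1 f + 4 * M 2 f + 3 * M 3 f)"
  by (simp add: sum.distrib sum_distrib_left Ncoll_eq_sum_card_vimage_sq M_def)

lemma sum_mul_card_vimage: "(\<Sum>y\<in>UNIV. c * card (f -` {y})) = c * card (UNIV :: 'a set)"
  by (simp add: sum_distrib_left[symmetric] sum_card_vimage)

lemma three_card_le_Ncoll_M1_plus_M2: "3 * card (UNIV :: 'a set) \<le> Ncoll f + 2 * (M 1 f + M 2 f)"
proof -
  have "(\<Sum>y\<in>UNIV. 3 * card (f -` {y})) \<le> (\<Sum>y\<in>UNIV. card (f -` {y}) * card (f -` {y})
     + 2 * (of_bool (card (f -` {y}) = 1) + of_bool (card (f -` {y}) = 2)))"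
    by (intro sum_mono mul_self_bound3_le)
  then show ?thesis by (simp only: sum_mul_self_bound3 sum_mul_card_vimage)
qed

lemma three_card_eq_Ncoll_M1_plus_M2_iff:
  "3 * card (UNIV :: 'a set) = Ncoll f + 2 * (M 1 f + M 2 f) \<longleftrightarrow> (\<forall>r>3. M r f = 0)"
proof -
  have "3 * card (UNIV :: 'a set) = Ncoll f + 2 * (M 1 f + M 2 f) \<longleftrightarrow>
    (\<Sum>y\<in>UNIV. 3 * card (f -` {y})) = (\<Sum>y\<in>UNIV. card (f -` {y}) * card (f -` {y})
     + 2 * (of_bool (card (f -` {y}) = 1) + of_bool (card (f -` {y}) = 2)))"
    by (simp only: sum_mul_self_bound3 sum_mul_card_vimage)
  also have "\<dots> \<longleftrightarrow> (\<forall>y. card (f -` {y}) \<le> 3)"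
    by (simp only: sum_eq_sum_iff_of_le finite mul_self_bound3_le mul_self_bound3_eq_iff ball_UNIV)
  finally show ?thesis by (simp only: M_eq_0_above_iff)
qed

lemma four_card_le_Ncoll_weighted_M:
  "4 * card (UNIV :: 'a set) \<le> Ncoll f + (3 * M 1 f + 4 * M 2 f + 3 * M 3 f)"
proof -
  have "(\<Sum>y\<in>UNIV. 4 * card (f -` {y})) \<le> (\<Sum>y\<in>UNIV. card (f -` {y}) * card (f -` {y})
     + 3 * of_bool (card (f -` {y}) = 1) + 4 * of_bool (card (f -` {y}) = 2)
     + 3 * of_bool (card (f -` {y}) = 3))"
    by (intro sum_mono mul_self_bound4_le)
  then show ?thesis by (simp only: sum_mul_self_bound4 sum_mul_card_vimage)
qed

lemma four_card_eq_Ncoll_weighted_M_iff: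
  "4 * card (UNIV :: 'a set) = Ncoll f + (3 * M 1 f + 4 * M 2 f + 3 * M 3 f)
   \<longleftrightarrow> (\<forall>r>4. M r f = 0)"
proof -
  have "4 * card (UNIV :: 'a set) = Ncoll f + (3 * M 1 f + 4 * M 2 f + 3 * M 3 f) \<longleftrightarrow>
    (\<Sum>y\<in>UNIV. 4 * card (f -` {y})) = (\<Sum>y\<in>UNIV. card (f -` {y}) * card (f -` {y})
     + 3 * of_bool (card (f -` {y}) = 1) + 4 * of_bool (card (f -` {y}) = 2)
     + 3 * of_bool (card (f -` {y}) = 3))"
    by (simp only: sum_mul_self_bound4 sum_mul_card_vimage)
  also have "\<dots> \<longleftrightarrow> (\<forall>y. card (f -` {y}) \<le> 4)"
    by (simp only: sum_eq_sum_iff_of_le finite mul_self_bound4_le mul_self_bound4_eq_iff ball_UNIV)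
  finally show ?thesis by (simp only: M_eq_0_above_iff)
qed

lemma Ncoll_M1_plus_M2_eq_if_fibres_le_4:
  assumes "\<forall>r>4. M r f = 0"
  shows "Ncoll f + 2 * (M 1 f + M 2 f) = 3 * card (UNIV :: 'a set) + 4 * M 4 f"
proof -
  have le: "\<forall>y. card (f -` {y}) \<le> 4" using assms by (simp add: M_eq_0_above_iff)
  have "Ncoll f + 2 * (M 1 f + M 2 f)
      = (\<Sum>y\<in>UNIV. 3 * card (f -` {y}) + 4 * of_bool (card (f -` {y}) = 4))"
    unfolding sum_mul_self_bound3[symmetric]
    by (intro sum.cong refl mul_self_bound3_eq_if_le_4 le[rule_format])
  then show ?thesis by (simp add: sum.distrib sum_distrib_left[symmetric] sum_card_vimage M_def)
qed

lemma card_eq_M123_if_fibres_le_3: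
  assumes "\<forall>r>3. M r f = 0"
  shows "card (UNIV :: 'a set) = M 1 f + 2 * M 2 f + 3 * M 3 f"
proof -
  have le: "\<forall>y. card (f -` {y}) \<le> 3" using assms by (simp add: M_eq_0_above_iff)
  have "card (UNIV :: 'a set) = (\<Sum>y\<in>UNIV. of_bool (card (f -` {y}) = 1)
      + 2 * of_bool (card (f -` {y}) = 2) + 3 * of_bool (card (f -` {y}) = 3))"
    unfolding sum_card_vimage[of f, symmetric]
    by (intro sum.cong refl eq_sum_of_bool_if_le_3 le[rule_format])
  then show ?thesis by (simp add: sum.distrib sum_distrib_left M_def)
qed

lemma M_eq_0_iff: "M r f = 0 \<longleftrightarrow> (\<forall>y. card (f -` {y}) \<noteq> r)"
  by (auto simp: M_def)

lemma M_eq_1_iff: "M r f = 1 \<longleftrightarrow> (\<exists>!y. card (f -` {y}) = r)"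
  unfolding M_def by (rule card_Collect_eq_1_iff)

lemma almost_3_to_1_iff_M: "almost_3_to_1 f \<longleftrightarrow> M 1 f = 1 \<and> M 2 f = 0 \<and> (\<forall>r>3. M r f = 0)"
proof -
  have rng: "y \<in> range f \<longleftrightarrow> card (f -` {y}) \<noteq> 0" for y by auto
  have one: "(\<exists>!y. y \<in> range f \<and> card (f -` {y}) = 1) \<longleftrightarrow> (\<exists>!y. card (f -` {y}) = 1)"
    unfolding rng by (metis one_neq_zero)
  have three: "(\<forall>z \<in> range f. card (f -` {z}) \<noteq> 1 \<longrightarrow> card (f -` {z}) = 3) \<longleftrightarrow>
      (\<forall>y. card (f -` {y}) \<noteq> 2) \<and> (\<forall>y. card (f -` {y}) \<le> 3)"
    unfolding Ball_def rng all_conj_distrib[symmetric] by (rule all_cong1) arith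
  show ?thesis
    unfolding M_eq_0_above_iff unfolding almost_3_to_1_def M_eq_1_iff M_eq_0_iff one three ..
qed

lemma one_double_rest_triple_iff_M:
  "(\<exists>y \<in> range f. card (f -` {y}) = 2 \<and> (\<forall>z \<in> range f. z \<noteq> y \<longrightarrow> card (f -` {z}) = 3))
   \<longleftrightarrow> M 1 f = 0 \<and> M 2 f = 1 \<and> (\<forall>r>3. M r f = 0)"
  unfolding M_eq_0_above_iff unfolding M_eq_1_iff M_eq_0_iff
proof (intro iffI conjI)
  have rng: "y \<in> range f \<longleftrightarrow> card (f -` {y}) \<noteq> 0" for y by auto
  show "\<exists>y \<in> range f. card (f -` {y}) = 2 \<and> (\<forall>z \<in> range f. z \<noteq> y \<longrightarrow> card (f -` {z}) = 3)"
    if "(\<forall>y. card (f -` {y}) \<noteq> 1) \<and> (\<exists>!y. card (f -` {y}) = 2) \<and> (\<forall>y. card (f -` {y}) \<le> 3)"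
  proof -
    from that obtain y0 where y0: "card (f -` {y0}) = 2"
      and uniq: "\<And>y. card (f -` {y}) = 2 \<Longrightarrow> y = y0"
      and no1: "\<And>y. card (f -` {y}) \<noteq> 1" and le3: "\<And>y. card (f -` {y}) \<le> 3"
      by blast
    have "card (f -` {z}) = 3" if "z \<in> range f" "z \<noteq> y0" for z
      using that no1[of z] le3[of z] uniq[of z] rng[of z] by arith
    with y0 rng[of y0] show ?thesis by auto
  qed
  assume "\<exists>y \<in> range f. card (f -` {y}) = 2 \<and> (\<forall>z \<in> range f. z \<noteq> y \<longrightarrow> card (f -` {z}) = 3)"
  then obtain y0 where "y0 \<in> range f" "card (f -` {y0}) = 2"
    and "\<forall>z \<in> range f. z \<noteq> y0 \<longrightarrow> card (f -` {z}) = 3" by blast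
  then have k: "card (f -` {z}) = (if z = y0 then 2 else if z \<in> range f then 3 else 0)" for z
    using rng[of z] by auto
  show "\<forall>y. card (f -` {y}) \<noteq> 1" using k by simp
  show "\<exists>!y. card (f -` {y}) = 2" using k by (intro ex1I[of _ y0]) (simp_all split: if_splits)
  show "\<forall>y. card (f -` {y}) \<le> 3" using k by simp
qed

lemma M1_plus_M2_ge_1:
  assumes "Ncoll f + 2 \<le> 3 * card (UNIV :: 'a set)"
  shows "1 \<le> M 1 f + M 2 f"
  using assms three_card_le_Ncoll_M1_plus_M2 unfolding distrib_left by linarith

lemma fibres_le_3_if_M1_plus_M2_eq_1:
  assumes "Ncoll f + 2 \<le> 3 * card (UNIV :: 'a set)" and "M 1 f + M 2 f = 1"
  shows "\<forall>r>3. M r f = 0"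
  using assms three_card_le_Ncoll_M1_plus_M2 unfolding three_card_eq_Ncoll_M1_plus_M2_iff[symmetric] distrib_left by linarith

lemma card_mod_3_if_M1_plus_M2_eq_1:
  assumes "Ncoll f + 2 \<le> 3 * card (UNIV :: 'a set)" and "M 1 f + M 2 f = 1"
  shows "card (UNIV :: 'a set) mod 3 = 1 + M 2 f"
proof -
  have "card (UNIV :: 'a set) = 1 + M 2 f + 3 * M 3 f"
    using card_eq_M123_if_fibres_le_3[OF fibres_le_3_if_M1_plus_M2_eq_1[OF assms]] assms(2) by simp
  with assms(2) show ?thesis by simp
qed

lemma M1_plus_M2_eq_1_iff_almost_3_to_1:
  assumes "Ncoll f + 2 \<le> 3 * card (UNIV :: 'a set)" and "card (UNIV :: 'a set) mod 3 = 1"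
  shows "M 1 f + M 2 f = 1 \<longleftrightarrow> almost_3_to_1 f"
  using assms fibres_le_3_if_M1_plus_M2_eq_1 card_mod_3_if_M1_plus_M2_eq_1 almost_3_to_1_iff_M by fastforce

lemma M1_plus_M2_eq_1_iff_one_double_rest_triple:
  assumes "Ncoll f + 2 \<le> 3 * card (UNIV :: 'a set)" and "card (UNIV :: 'a set) mod 3 = 2"
  shows "M 1 f + M 2 f = 1 \<longleftrightarrow>
    (\<exists>y \<in> range f. card (f -` {y}) = 2 \<and> (\<forall>z \<in> range f. z \<noteq> y \<longrightarrow> card (f -` {z}) = 3))"
  using assms fibres_le_3_if_M1_plus_M2_eq_1 card_mod_3_if_M1_plus_M2_eq_1 one_double_rest_triple_iff_M by fastforce

lemma card_plus_2_le_weighted_M: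
  assumes "Ncoll f + 2 \<le> 3 * card (UNIV :: 'a set)"
  shows "card (UNIV :: 'a set) + 2 \<le> 3 * M 1 f + 4 * M 2 f + 3 * M 3 f"
  using assms four_card_le_Ncoll_weighted_M by linarith

lemma weighted_M_eq_card_plus_2_iff:
  assumes "Ncoll f + 2 \<le> 3 * card (UNIV :: 'a set)"
  shows "3 * M 1 f + 4 * M 2 f + 3 * M 3 f = card (UNIV :: 'a set) + 2 \<longleftrightarrow>
    Ncoll f = 3 * card (UNIV :: 'a set) - 2 \<and> (\<forall>r>4. M r f = 0)"
  using assms four_card_le_Ncoll_weighted_M unfolding four_card_eq_Ncoll_weighted_M_iff[symmetric] by arith

lemma M1_plus_M2_eq_2_M4_plus_1:
  assumes "Ncoll f + 2 \<le> 3 * card (UNIV :: 'a set)"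
    and "3 * M 1 f + 4 * M 2 f + 3 * M 3 f = card (UNIV :: 'a set) + 2"
  shows "M 1 f + M 2 f = 2 * M 4 f + 1"
proof -
  have N: "Ncoll f = 3 * card (UNIV :: 'a set) - 2" and le4: "\<forall>r>4. M r f = 0"
    using weighted_M_eq_card_plus_2_iff[OF assms(1)] assms(2) by blast+
  have "Ncoll f + 2 * (M 1 f + M 2 f) = 3 * card (UNIV :: 'a set) + 4 * M 4 f"
    using le4 by (rule Ncoll_M1_plus_M2_eq_if_fibres_le_4)
  moreover have "card (UNIV :: 'a set) > 0" by (simp add: card_gt_0_iff)
  ultimately show ?thesis using N unfolding distrib_left by linarith
qed

end

lemma CHAR_eq_2_if_card_eq_2_power:
  assumes "card (UNIV :: 'a::{idom,finite} set) = 2 ^ n"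
  shows "CHAR('a) = 2"
proof -
  have "CHAR('a) > 0" by (rule finite_imp_CHAR_pos) simp
  then have "prime CHAR('a)" by (rule prime_CHAR_semidom)
  moreover have "CHAR('a) dvd 2 ^ n" using CHAR_dvd_CARD[where 'a = 'a] assms by simp
  ultimately show ?thesis using prime_dvd_power primes_dvd_imp_eq two_is_prime_nat by blast
qed

lemma Ncoll_le_if_APN:
  fixes f :: "'a::{field,finite} \<Rightarrow> 'a"
  assumes "CHAR('a) = 2" and "APN f"
  shows "Ncoll f + 2 \<le> 3 * card (UNIV :: 'a set)"
proof -
  define S where "S = (SIGMA a:UNIV - {0}. {x. f (x + a) + f x = 0})"
  have "{(x, y). f x = f y} \<subseteq> range (\<lambda>x. (x, x)) \<union> (\<lambda>(a, x). (x, x + a)) ` S"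
  proof
    fix p assume "p \<in> {(x, y). f x = f y}"
    then obtain x y where p: "p = (x, y)" and "f x = f y" by blast
    show "p \<in> range (\<lambda>x. (x, x)) \<union> (\<lambda>(a, x). (x, x + a)) ` S"
    proof (cases "x = y")
      case False
      then have "y - x \<noteq> 0" and "f (x + (y - x)) + f x = 0"
        using \<open>f x = f y\<close> minus_CHAR_2[OF assms(1), of "f y" "f x"] by auto
      then have "(y - x, x) \<in> S" by (simp add: S_def)
      then show ?thesis unfolding p by force
    qed (simp add: p)
  qed
  then have "Ncoll f \<le> card (range (\<lambda>x::'a. (x, x))) + card ((\<lambda>(a, x). (x, x + a)) ` S)"
    unfolding Ncoll_def by (meson card_Un_le card_mono finite le_trans)
  also have "\<dots> \<le> card (UNIV :: 'a set) + card S"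
    by (intro add_mono card_image_le) simp_all
  also have "card S = (\<Sum>a\<in>UNIV - {0}. card {x. f (x + a) + f x = 0})"
    unfolding S_def by (rule card_SigmaI) simp_all
  also have "\<dots> \<le> (\<Sum>a\<in>UNIV - {0::'a}. 2)"
    using assms(2) by (intro sum_mono) (simp add: APN_def)
  also have "\<dots> = 2 * (card (UNIV :: 'a set) - 1)" by (simp add: card_Diff_singleton)
  finally show ?thesis using card_gt_0_iff[of "UNIV :: 'a set"] by simp
qed

lemma power_two_mod_3: "(2::nat) ^ n mod 3 = (if even n then 1 else 2)"
  by (induction n) (auto simp: mod_mult_right_eq[of 2 "2 ^ _" 3, symmetric])

theorem corollary4p1:
  fixes f :: "'a::{field,finite} \<Rightarrow> 'a" and n :: nat
  assumes card: "card (UNIV :: 'a set) = 2 ^ n"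
    and apn: "APN f"
  shows "M 1 f + M 2 f \<ge> 1
    \<and> (even n \<longrightarrow> (M 1 f + M 2 f = 1 \<longleftrightarrow> almost_3_to_1 f))
    \<and> (odd n \<longrightarrow> (M 1 f + M 2 f = 1 \<longleftrightarrow>
          (\<exists>y \<in> range f. card (f -` {y}) = 2 \<and>
             (\<forall>z \<in> range f. z \<noteq> y \<longrightarrow> card (f -` {z}) = 3))))
    \<and> 3 * M 1 f + 4 * M 2 f + 3 * M 3 f \<ge> 2 ^ n + 2
    \<and> (3 * M 1 f + 4 * M 2 f + 3 * M 3 f = 2 ^ n + 2 \<longleftrightarrow>
          Ncoll f = 3 * 2 ^ n - 2 \<and> (\<forall>r > 4. M r f = 0))
    \<and> (3 * M 1 f + 4 * M 2 f + 3 * M 3 f = 2 ^ n + 2 \<longrightarrow>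
          M 1 f + M 2 f = 2 * M 4 f + 1)"
proof -
  have bound: "Ncoll f + 2 \<le> 3 * card (UNIV :: 'a set)"
    using Ncoll_le_if_APN[OF CHAR_eq_2_if_card_eq_2_power[OF card] apn] .
  have mod3: "card (UNIV :: 'a set) mod 3 = (if even n then 1 else 2)"
    unfolding card by (rule power_two_mod_3)
  have "even n \<Longrightarrow> M 1 f + M 2 f = 1 \<longleftrightarrow> almost_3_to_1 f"
    using M1_plus_M2_eq_1_iff_almost_3_to_1[OF bound] mod3 by simp
  moreover have "odd n \<Longrightarrow> M 1 f + M 2 f = 1 \<longleftrightarrow>
      (\<exists>y \<in> range f. card (f -` {y}) = 2 \<and> (\<forall>z \<in> range f. z \<noteq> y \<longrightarrow> card (f -` {z}) = 3))"
    using M1_plus_M2_eq_1_iff_one_double_rest_triple[OF bound] mod3 by simp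
  ultimately show ?thesis
    using M1_plus_M2_ge_1[OF bound] card_plus_2_le_weighted_M[OF bound] weighted_M_eq_card_plus_2_iff[OF bound]
      M1_plus_M2_eq_2_M4_plus_1[OF bound]
    unfolding card by blast
qed

end
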